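(* Under the standing assumptions, $\sum_{n\eta_3\le S\le n}\Phi(S)=o(1)$ as $n\to\infty$, the sum being over integers $S$.
   Context: Parameters: integer $k\ge2$, constants $\alpha>0$, $r>0$, $0<p<1$; $d=n^{\alpha}$ (treated as an integer), $m=n\ln d$, $\tau=\frac1{1-p}$, $r_{cr}=\frac1{\ln\tau}$. Standing assumptions: $(2k-1)\alpha>1$, $k\alpha\le1$, $k\ge\frac{\tau\ln\tau}{\tau-1}$, and $r<r_{cr}$. Notation: $f(s)=1+\frac{p}{1-p}\cdot\frac{s^k-d^{-k}}{1-d^{-k}}$ for $s\in[0,1]$; $B(S)=\binom{n}{S}\left(\frac1d\right)^{S}\left(1-\frac1d\right)^{n-S}$; $W(S)=f(S/n)^{rm}$; $\Phi(S)=B(S)W(S)$. Let $\alpha_0=\frac{(2k-1)\alpha-1}{2(k-1)}$, and let $\eta_2,\eta_3,\mu$ be constants with $0<\eta_2<\eta_3<1$, $\alpha_0/\alpha-\mu\eta_2^{k-1}>0$, $\mu>\frac{kpr}{1-p}$, and $r\ln(1-p)+\eta_3>0$. *)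

theory Defs
  imports Complex_Main
begin

definition dd :: "real \<Rightarrow> nat \<Rightarrow> real" where
  "dd \<alpha> n = real n powr \<alpha>"

definition mm :: "real \<Rightarrow> nat \<Rightarrow> real" where
  "mm \<alpha> n = real n * ln (dd \<alpha> n)"

definition ff :: "nat \<Rightarrow> real \<Rightarrow> real \<Rightarrow> nat \<Rightarrow> real \<Rightarrow> real" where
  "ff k \<alpha> p n s = 1 + p / (1 - p) * ((s ^ k - (1 / dd \<alpha> n) ^ k) / (1 - (1 / dd \<alpha> n) ^ k))"

definition BB :: "real \<Rightarrow> nat \<Rightarrow> nat \<Rightarrow> real" where
  "BB \<alpha> n S = real (n choose S) * (1 / dd \<alpha> n) ^ S * (1 - 1 / dd \<alpha> n) ^ (n - S)"

definition WW :: "nat \<Rightarrow> real \<Rightarrow> real \<Rightarrow> real \<Rightarrow> nat \<Rightarrow> nat \<Rightarrow> real" where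
  "WW k \<alpha> r p n S = ff k \<alpha> p n (real S / real n) powr (r * mm \<alpha> n)"

definition Phi :: "nat \<Rightarrow> real \<Rightarrow> real \<Rightarrow> real \<Rightarrow> nat \<Rightarrow> nat \<Rightarrow> real" where
  "Phi k \<alpha> r p n S = BB \<alpha> n S * WW k \<alpha> r p n S"

end

theory Submission
  imports Defs "HOL-Real_Asymp.Real_Asymp"
begin

text \<open>
  Crude bounds suffice. Since \<open>f \<le> \<tau>\<close>, the weight satisfies \<open>W(S) \<le> \<tau>\<^bsup>r m\<^esup> = d\<^bsup>r n ln \<tau>\<^esup>\<close>,
  while \<open>B(S) \<le> 2\<^sup>n d\<^bsup>-S\<^esup> \<le> 2\<^sup>n d\<^bsup>-\<eta>\<^sub>3 n\<^esup>\<close> for \<open>S \<ge> \<eta>\<^sub>3 n\<close>. Hence each of the at most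
  \<open>n + 1\<close> terms is at most \<open>2\<^sup>n n\<^bsup>-\<alpha> c n\<^esup>\<close> with \<open>c = \<eta>\<^sub>3 - r ln \<tau> > 0\<close>, and
  \<open>(n + 1) 2\<^sup>n n\<^bsup>-\<alpha> c n\<^esup> \<rightarrow> 0\<close>.
\<close>

lemma normalized_diff_in_unit_interval:
  fixes e x :: real
  assumes "e \<le> x" and "x \<le> 1"
  shows "0 \<le> (x - e) / (1 - e)" and "(x - e) / (1 - e) \<le> 1"
  using assms by (cases "e = 1"; simp add: divide_le_eq)+

lemma ff_between:
  assumes p: "0 < p" "p < 1" and d: "dd \<alpha> n \<ge> 1"
    and s: "1 / dd \<alpha> n \<le> s" "s \<le> 1"
  shows "1 \<le> ff k \<alpha> p n s" and "ff k \<alpha> p n s \<le> 1 / (1 - p)"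
proof -
  define q where "q = (s ^ k - (1 / dd \<alpha> n) ^ k) / (1 - (1 / dd \<alpha> n) ^ k)"
  have "(1 / dd \<alpha> n) ^ k \<le> s ^ k"
    using s d by (intro power_mono) auto
  moreover have "s ^ k \<le> 1"
    using s d by (intro power_le_one) (auto intro: order_trans[rotated])
  ultimately have q: "0 \<le> q" "q \<le> 1"
    unfolding q_def by (rule normalized_diff_in_unit_interval)+
  have ff_eq: "ff k \<alpha> p n s = 1 + p / (1 - p) * q"
    unfolding ff_def q_def ..
  have "0 \<le> p / (1 - p) * q" and "p / (1 - p) * q \<le> p / (1 - p)"
    using p q mult_left_le[OF q(2), of "p / (1 - p)"] by auto
  then show "1 \<le> ff k \<alpha> p n s" and "ff k \<alpha> p n s \<le> 1 / (1 - p)"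
    using p unfolding ff_eq by (auto simp: field_simps)
qed

lemma WW_le:
  assumes p: "0 < p" "p < 1" and r: "r \<ge> 0" and d: "dd \<alpha> n \<ge> 1"
    and S: "real n / dd \<alpha> n \<le> real S" "S \<le> n"
  shows "WW k \<alpha> r p n S \<le> dd \<alpha> n powr (r * ln (1 / (1 - p)) * real n)"
proof (cases "n = 0")
  case True
  then show ?thesis using d by (simp add: dd_def)
next
  case False
  have s: "1 / dd \<alpha> n \<le> real S / real n" "real S / real n \<le> 1"
    using S False by (auto simp: field_simps)
  have "WW k \<alpha> r p n S \<le> (1 / (1 - p)) powr (r * mm \<alpha> n)"
    unfolding WW_def using ff_between[OF p d s, of k] r d
    by (intro powr_mono2) (auto simp: mm_def)
  also have "\<dots> = dd \<alpha> n powr (r * ln (1 / (1 - p)) * real n)"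
    using d p by (simp add: powr_def mm_def)
  finally show ?thesis .
qed

lemma BB_le:
  assumes d: "dd \<alpha> n \<ge> 1" and S: "\<eta> * real n \<le> real S"
  shows "BB \<alpha> n S \<le> 2 ^ n * dd \<alpha> n powr (- \<eta> * real n)"
proof -
  have "BB \<alpha> n S = real (n choose S) * dd \<alpha> n powr (- real S) * (1 - 1 / dd \<alpha> n) ^ (n - S)"
    using d by (simp add: BB_def powr_minus_divide powr_realpow power_one_over)
  also have "\<dots> \<le> 2 ^ n * dd \<alpha> n powr (- \<eta> * real n) * 1"
  proof (intro mult_mono)
    show "real (n choose S) \<le> 2 ^ n"
      using binomial_le_pow2[of n S] by (metis of_nat_le_iff of_nat_numeral of_nat_power)
    show "dd \<alpha> n powr (- real S) \<le> dd \<alpha> n powr (- \<eta> * real n)"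
      using d S by (intro powr_mono) auto
    show "(1 - 1 / dd \<alpha> n) ^ (n - S) \<le> 1"
      using d by (intro power_le_one) auto
  qed (use d in auto)
  finally show ?thesis
    by simp
qed

lemma Phi_nonneg:
  assumes "dd \<alpha> n \<ge> 1"
  shows "0 \<le> Phi k \<alpha> r p n S"
  using assms by (simp add: Phi_def BB_def WW_def)

lemma Phi_le:
  assumes p: "0 < p" "p < 1" and r: "r \<ge> 0" and d: "dd \<alpha> n \<ge> 1" "1 / dd \<alpha> n \<le> \<eta>"
    and S: "\<eta> * real n \<le> real S" "S \<le> n"
  shows "Phi k \<alpha> r p n S \<le> 2 ^ n * dd \<alpha> n powr (- (\<eta> - r * ln (1 / (1 - p))) * real n)"
proof -
  have "real n / dd \<alpha> n \<le> real S"
    using d(2) S(1) mult_right_mono[OF d(2), of "real n"] by simp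
  then have "Phi k \<alpha> r p n S
      \<le> (2 ^ n * dd \<alpha> n powr (- \<eta> * real n)) * dd \<alpha> n powr (r * ln (1 / (1 - p)) * real n)"
    unfolding Phi_def using BB_le[OF d(1) S(1)] WW_le[OF p r d(1) _ S(2)] d(1)
    by (intro mult_mono) (auto simp: BB_def WW_def)
  also have "\<dots> = 2 ^ n * dd \<alpha> n powr (- (\<eta> - r * ln (1 / (1 - p))) * real n)"
    by (simp add: mult.assoc powr_add[symmetric] algebra_simps)
  finally show ?thesis .
qed

lemma sum_Phi_tail_le:
  assumes p: "0 < p" "p < 1" and r: "r \<ge> 0" and d: "dd \<alpha> n \<ge> 1" "1 / dd \<alpha> n \<le> \<eta>"
  shows "(\<Sum>S\<in>{S::nat. real n * \<eta> \<le> real S \<and> S \<le> n}. Phi k \<alpha> r p n S)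
    \<le> (real n + 1) * (2 ^ n * dd \<alpha> n powr (- (\<eta> - r * ln (1 / (1 - p))) * real n))"
    (is "sum _ ?A \<le> _ * ?bound")
proof -
  have "?A \<subseteq> {..n}"
    by auto
  then have "card ?A \<le> n + 1"
    using card_mono[of "{..n}" ?A] by simp
  have "Phi k \<alpha> r p n S \<le> ?bound" if "S \<in> ?A" for S
    using that Phi_le[OF p r d, of S k] by (simp add: mult.commute)
  then have "sum (Phi k \<alpha> r p n) ?A \<le> real (card ?A) * ?bound"
    using sum_bounded_above by blast
  also have "\<dots> \<le> (real n + 1) * ?bound"
    using \<open>card ?A \<le> n + 1\<close> by (intro mult_right_mono) auto
  finally show ?thesis .
qed

theorem lemma4p10:
  fixes k :: nat and \<alpha> r p \<eta>2 \<eta>3 \<mu> :: real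
  assumes "k \<ge> 2" and "\<alpha> > 0" and "r > 0" and "0 < p" and "p < 1"
    and "(2 * real k - 1) * \<alpha> > 1" and "real k * \<alpha> \<le> 1"
    and "real k \<ge> (1 / (1 - p)) * ln (1 / (1 - p)) / (1 / (1 - p) - 1)"
    and "r < 1 / ln (1 / (1 - p))"
    and "0 < \<eta>2" and "\<eta>2 < \<eta>3" and "\<eta>3 < 1"
    and "(((2 * real k - 1) * \<alpha> - 1) / (2 * (real k - 1))) / \<alpha> - \<mu> * \<eta>2 ^ (k - 1) > 0"
    and "\<mu> > real k * p * r / (1 - p)"
    and "r * ln (1 - p) + \<eta>3 > 0"
  shows "(\<lambda>n::nat. \<Sum>S\<in>{S::nat. real n * \<eta>3 \<le> real S \<and> S \<le> n}. Phi k \<alpha> r p n S)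
           \<longlonglongrightarrow> 0"
proof -
  define c where "c = \<eta>3 - r * ln (1 / (1 - p))"
  let ?tail = "\<lambda>n::nat. \<Sum>S\<in>{S::nat. real n * \<eta>3 \<le> real S \<and> S \<le> n}. Phi k \<alpha> r p n S"
  have "c > 0"
    using assms(4,5,15) unfolding c_def by (simp add: ln_div)
  then have bound_to_0: "(\<lambda>n. (real n + 1) * (2 ^ n * (real n powr \<alpha>) powr (- c * real n))) \<longlonglongrightarrow> 0"
    using assms(2) by real_asymp
  have "filterlim (\<lambda>n::nat. real n powr \<alpha>) at_top sequentially"
    using assms(2) by real_asymp
  then have "eventually (\<lambda>n. dd \<alpha> n \<ge> max 1 (1 / \<eta>3)) sequentially"
    unfolding filterlim_at_top dd_def by (rule allE)
  then have bounds: "eventually (\<lambda>n. 0 \<le> ?tail n \<and>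
      ?tail n \<le> (real n + 1) * (2 ^ n * (real n powr \<alpha>) powr (- c * real n))) sequentially"
  proof eventually_elim
    case (elim n)
    then have d: "dd \<alpha> n \<ge> 1" "1 / dd \<alpha> n \<le> \<eta>3"
      using assms(10,11) by (auto simp: field_simps)
    show ?case
      using sum_Phi_tail_le[OF assms(4,5) _ d, of r k] assms(3) Phi_nonneg[OF d(1)]
      unfolding c_def dd_def by (auto intro: sum_nonneg)
  qed
  show ?thesis
    by (rule tendsto_sandwich[OF _ _ tendsto_const bound_to_0])
      (use bounds in \<open>auto elim: eventually_mono\<close>)
qed

end
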